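(* There exists a constant $C>0$ such that for all $t,s\in(0,1)$ and all integers $j_1\le j_2$ with $j_2\ge0$, both quantities \[\sum_{k_1\in\mathbb{Z}}\sum_{k_2\in\mathbb{Z}^<_{j_2}(t,s)}L_{j_1,j_2}^{k_1,k_2}\big|I_{j_1,j_2}^{k_1,k_2}[t,s]\big|\quad\text{and}\quad\sum_{k_1\in\mathbb{Z}}\sum_{k_2\in\mathbb{Z}^>_{j_2}(t,s)}L_{j_1,j_2}^{k_1,k_2}\big|I_{j_1,j_2}^{k_1,k_2}[t,s]\big|\] are bounded above by $C\sqrt{\log(3+|j_1|+2^{j_1})}\sqrt{\log(3+|j_2|+2^{j_2})}\,2^{-j_2}$.
   Context: Fix $H_1,H_2\in(\tfrac12,1)$ with $H_1+H_2>\tfrac32$. Let $\psi$ be the Meyer wavelet (Schwartz, $\widehat\psi$ compactly supported away from $0$, generating an orthonormal wavelet basis of $L^2(\mathbb{R})$). For $H\in(\tfrac12,1)$, $\psi_H$ is defined by $\widehat{\psi_H}(0)=0$, $\widehat{\psi_H}(\xi)=(i\xi)^{-(H-\frac12)}\widehat\psi(\xi)$ ($\xi\neq0$); equivalently $\psi_H(t)=\frac{1}{\Gamma(H-\frac12)}\int_{\mathbb{R}}(t-x)_+^{H-\frac32}\psi(x)dx$. Set $I_{j_1,j_2}^{k_1,k_2}[t,s]=\int_{[t,s]}\psi_{H_1}(2^{j_1}x-k_1)\psi_{H_2}(2^{j_2}x-k_2)dx$ (integral over the interval between $t$ and $s$, taken in absolute orientation), $L_{j_1,j_2}^{k_1,k_2}=\sqrt{\log(3+|j_1|+|k_1|)}\sqrt{\log(3+|j_2|+|k_2|)}$,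 $\mathbb{Z}^<_{j}(t,s)=\{k\in\mathbb{Z}:k2^{-j}<\min\{t,s\}\}$, $\mathbb{Z}^>_{j}(t,s)=\{k\in\mathbb{Z}:k2^{-j}>\max\{t,s\}\}$. *)

theory Defs
  imports "HOL-Analysis.Analysis"
begin

definition fourier :: "(real \<Rightarrow> real) \<Rightarrow> real \<Rightarrow> complex" where
  "fourier f \<xi> = integral\<^sup>L lborel (\<lambda>x. complex_of_real (f x) * cis (- \<xi> * x))"

definition schwartz :: "(real \<Rightarrow> real) \<Rightarrow> bool" where
  "schwartz f \<longleftrightarrow>
     (\<forall>n x. (deriv ^^ n) f differentiable (at x)) \<and>
     (\<forall>n m. \<exists>B. \<forall>x. \<bar>x\<bar> ^ m * \<bar>(deriv ^^ n) f x\<bar> \<le> B)"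

definition wav :: "(real \<Rightarrow> real) \<Rightarrow> int \<Rightarrow> int \<Rightarrow> real \<Rightarrow> real" where
  "wav \<psi> j k x = 2 powr (real_of_int j / 2) * \<psi> (2 powr real_of_int j * x - real_of_int k)"

definition orthonormal_wavelet_basis :: "(real \<Rightarrow> real) \<Rightarrow> bool" where
  "orthonormal_wavelet_basis \<psi> \<longleftrightarrow>
     (\<forall>j k. wav \<psi> j k \<in> borel_measurable lborel \<and> integrable lborel (\<lambda>x. (wav \<psi> j k x)\<^sup>2)) \<and>
     (\<forall>j k j' k'. (LINT x|lborel. wav \<psi> j k x * wav \<psi> j' k' x)
                    = (if (j, k) = (j', k') then 1 else 0)) \<and>
     (\<forall>f. f \<in> borel_measurable lborel \<longrightarrow> integrable lborel (\<lambda>x. (f x)\<^sup>2) \<longrightarrow>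
          (\<forall>j k. (LINT x|lborel. f x * wav \<psi> j k x) = 0) \<longrightarrow> (AE x in lborel. f x = 0))"

definition meyer_wavelet :: "(real \<Rightarrow> real) \<Rightarrow> bool" where
  "meyer_wavelet \<psi> \<longleftrightarrow> schwartz \<psi> \<and> orthonormal_wavelet_basis \<psi> \<and>
     (\<forall>\<xi>. (\<bar>\<xi>\<bar> < 2 * pi / 3 \<or> \<bar>\<xi>\<bar> > 8 * pi / 3) \<longrightarrow> fourier \<psi> \<xi> = 0)"

definition psiH :: "(real \<Rightarrow> real) \<Rightarrow> real \<Rightarrow> real \<Rightarrow> real" where
  "psiH \<psi> H t = (1 / Gamma (H - 1/2)) *
     (LINT x|lborel. (if x < t then (t - x) powr (H - 3/2) else 0) * \<psi> x)"

definition Iint :: "(real \<Rightarrow> real) \<Rightarrow> real \<Rightarrow> real \<Rightarrow> int \<Rightarrow> int \<Rightarrow> int \<Rightarrow> int \<Rightarrow> real \<Rightarrow> real \<Rightarrow> real" where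
  "Iint \<psi> H1 H2 j1 j2 k1 k2 t s =
     (LINT x:{min t s..max t s}|lborel.
        psiH \<psi> H1 (2 powr real_of_int j1 * x - real_of_int k1) *
        psiH \<psi> H2 (2 powr real_of_int j2 * x - real_of_int k2))"

definition Lw :: "int \<Rightarrow> int \<Rightarrow> int \<Rightarrow> int \<Rightarrow> real" where
  "Lw j1 j2 k1 k2 = sqrt (ln (3 + real_of_int \<bar>j1\<bar> + real_of_int \<bar>k1\<bar>)) *
                    sqrt (ln (3 + real_of_int \<bar>j2\<bar> + real_of_int \<bar>k2\<bar>))"

definition Zlt :: "int \<Rightarrow> real \<Rightarrow> real \<Rightarrow> int set" where
  "Zlt j t s = {k. real_of_int k * 2 powr (- real_of_int j) < min t s}"

definition Zgt :: "int \<Rightarrow> real \<Rightarrow> real \<Rightarrow> int set" where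
  "Zgt j t s = {k. real_of_int k * 2 powr (- real_of_int j) > max t s}"

end

theory Submission
  imports Defs "HOL-Probability.Sinc_Integral" "HOL-Probability.Characteristic_Functions"
begin

text \<open>
  The function \<open>\<psi>\<^sub>H\<close> is a fractional integral of \<open>\<psi>\<close> of order \<open>H - 1/2\<close>, with kernel
  \<open>(t - x)\<^sub>+ ^ a\<close>, \<open>a = H - 3/2 \<in> (-1, -1/2)\<close>. Since the Fourier transform of the Meyer wavelet
  vanishes near the origin, \<open>\<psi>\<close> has vanishing zeroth and first moments, so for large \<open>t\<close> one may
  subtract the first-order Taylor polynomial of \<open>(t - x) ^ a\<close> at \<open>x = 0\<close>; this gives
  \<open>\<psi>\<^sub>H(t) = O(t ^ (a - 2))\<close>, and in all cases \<open>\<psi>\<^sub>H(u) = O((1 + \<bar>u\<bar>) ^ (-5/2))\<close>.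

  On \<open>[0, 1]\<close> the logarithmic weight \<open>\<surd>log(3 + \<bar>j\<bar> + \<bar>k\<bar>)\<close> costs at most
  \<open>3 \<surd>log(3 + \<bar>j\<bar> + 2^j) (1 + \<bar>2^j x - k\<bar>) ^ (1/4)\<close>, so each summand is bounded by the
  integral of a product of two bumps \<open>(1 + \<bar>2^j x - k\<bar>) ^ (-9/4)\<close>. The bumps in \<open>k\<^sub>1\<close> sum to a
  constant at every point, and integrating the bumps in \<open>k\<^sub>2\<close> over \<open>[min t s, max t s]\<close> and summing
  over the lattice points on one side of the interval gives \<open>2 ^ (-j\<^sub>2)\<close> times a convergent series.
\<close>

section \<open>Schwartz functions\<close>

lemma one_plus_abs_power_le: "(1 + \<bar>x::real\<bar>) ^ m \<le> 2 ^ m * (1 + \<bar>x\<bar> ^ m)"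
proof (cases "\<bar>x\<bar> \<le> 1")
  case True
  then have "(1 + \<bar>x\<bar>) ^ m \<le> 2 ^ m" by (intro power_mono) auto
  moreover have "(2::real) ^ m \<le> 2 ^ m * (1 + \<bar>x\<bar> ^ m)" by simp
  ultimately show ?thesis by linarith
next
  case False
  then have "(1 + \<bar>x\<bar>) ^ m \<le> (2 * \<bar>x\<bar>) ^ m" by (intro power_mono) auto
  moreover have "(2 * \<bar>x\<bar>) ^ m \<le> 2 ^ m * (1 + \<bar>x\<bar> ^ m)"
    by (simp add: power_mult_distrib)
  ultimately show ?thesis by linarith
qed

lemma integrable_inverse_one_plus_square: "integrable lborel (\<lambda>x::real. inverse (1 + x^2))"
  using integrable_inverse_1_plus_square by (simp add: set_integrable_def)

locale schwartz_function =
  fixes \<psi> :: "real \<Rightarrow> real"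
  assumes schwartz: "schwartz \<psi>"
begin

lemma psi_continuous: "continuous_on UNIV \<psi>"
proof -
  have "\<psi> differentiable (at x)" for x
    using schwartz unfolding schwartz_def by (metis funpow_0)
  then show ?thesis
    by (meson continuous_at_imp_continuous_on differentiable_imp_continuous_within)
qed

lemma psi_measurable[measurable]: "\<psi> \<in> borel_measurable lborel"
  using borel_measurable_continuous_onI[OF psi_continuous] by simp

definition weighted_abs :: "nat \<Rightarrow> real \<Rightarrow> real" where
  "weighted_abs n x = (1 + \<bar>x\<bar>) ^ n * \<bar>\<psi> x\<bar>"

lemma weighted_abs_nonneg: "0 \<le> weighted_abs n x"
  by (simp add: weighted_abs_def)

lemma weighted_abs_mono: "m \<le> n \<Longrightarrow> weighted_abs m x \<le> weighted_abs n x"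
  unfolding weighted_abs_def by (intro mult_right_mono power_increasing) auto

lemma weighted_abs_le_inverse_square: "\<exists>C. \<forall>x. weighted_abs n x \<le> C * inverse (1 + x^2)"
proof -
  obtain B0 where "\<And>x. \<bar>x\<bar> ^ 0 * \<bar>(deriv ^^ 0) \<psi> x\<bar> \<le> B0"
    using schwartz unfolding schwartz_def by blast
  then have B0: "\<And>x. \<bar>\<psi> x\<bar> \<le> B0" by simp
  obtain Bm where "\<And>x. \<bar>x\<bar> ^ (n+2) * \<bar>(deriv ^^ 0) \<psi> x\<bar> \<le> Bm"
    using schwartz unfolding schwartz_def by blast
  then have Bm: "\<And>x. \<bar>x\<bar> ^ (n+2) * \<bar>\<psi> x\<bar> \<le> Bm" by simp
  have "weighted_abs n x \<le> 2 ^ (n+2) * (B0 + Bm) * inverse (1 + x^2)" for x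
  proof -
    have "(1 + \<bar>x\<bar>) ^ (n+2) * \<bar>\<psi> x\<bar> \<le> 2 ^ (n+2) * (1 + \<bar>x\<bar> ^ (n+2)) * \<bar>\<psi> x\<bar>"
      by (intro mult_right_mono one_plus_abs_power_le) auto
    also have "\<dots> = 2 ^ (n+2) * (\<bar>\<psi> x\<bar> + \<bar>x\<bar> ^ (n+2) * \<bar>\<psi> x\<bar>)"
      by (simp add: algebra_simps)
    also have "\<dots> \<le> 2 ^ (n+2) * (B0 + Bm)"
      using B0[of x] Bm[of x] by (intro mult_left_mono) auto
    finally have high: "(1 + \<bar>x\<bar>) ^ (n+2) * \<bar>\<psi> x\<bar> \<le> 2 ^ (n+2) * (B0 + Bm)" .
    have "weighted_abs n x * (1 + x^2) \<le> weighted_abs n x * (1 + \<bar>x\<bar>)^2"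
      by (intro mult_left_mono) (auto simp: power2_eq_square algebra_simps weighted_abs_nonneg)
    also have "\<dots> = (1 + \<bar>x\<bar>) ^ (n+2) * \<bar>\<psi> x\<bar>"
      by (simp add: weighted_abs_def power_add power2_eq_square)
    finally show ?thesis
      using high by (simp add: field_simps add_pos_nonneg)
  qed
  then show ?thesis by blast
qed

lemma weighted_abs_integrable: "integrable lborel (weighted_abs n)"
proof -
  obtain C where C: "\<And>x. weighted_abs n x \<le> C * inverse (1 + x^2)"
    using weighted_abs_le_inverse_square by blast
  show ?thesis
  proof (rule Bochner_Integration.integrable_bound)
    show "integrable lborel (\<lambda>x. C * inverse (1 + x^2))"
      using integrable_inverse_one_plus_square by simp
    show "weighted_abs n \<in> borel_measurable lborel"
      unfolding weighted_abs_def by measurable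
    show "AE x in lborel. norm (weighted_abs n x) \<le> norm (C * inverse (1 + x\<^sup>2))"
    proof (intro AE_I2)
      fix x
      have "weighted_abs n x \<le> \<bar>C * inverse (1 + x\<^sup>2)\<bar>"
        using C[of x] by linarith
      then show "norm (weighted_abs n x) \<le> norm (C * inverse (1 + x\<^sup>2))"
        using weighted_abs_nonneg[of n x] by simp
    qed
  qed
qed

lemma weighted_abs_bounded: "\<exists>S. \<forall>x. weighted_abs n x \<le> S"
proof -
  obtain C where C: "\<And>x. weighted_abs n x \<le> C * inverse (1 + x^2)"
    using weighted_abs_le_inverse_square by blast
  have "C * inverse (1 + x^2) \<le> \<bar>C\<bar>" for x :: real
  proof -
    have "0 \<le> inverse (1 + x^2)" "inverse (1 + x^2) \<le> 1"
      by (simp_all add: add_pos_nonneg inverse_le_1_iff)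
    then have "\<bar>C\<bar> * inverse (1 + x^2) \<le> \<bar>C\<bar>"
      by (simp add: mult_left_le)
    moreover have "C * inverse (1 + x^2) \<le> \<bar>C\<bar> * inverse (1 + x^2)"
      using \<open>0 \<le> inverse (1 + x^2)\<close> by (intro mult_right_mono) auto
    ultimately show ?thesis by linarith
  qed
  then show ?thesis using C by (meson order_trans)
qed

definition weighted_sup :: "nat \<Rightarrow> real" where
  "weighted_sup n = (SOME S. \<forall>x. weighted_abs n x \<le> S)"

lemma weighted_abs_le_sup: "weighted_abs n x \<le> weighted_sup n"
  using someI_ex[OF weighted_abs_bounded[of n]] unfolding weighted_sup_def by blast

lemma weighted_sup_nonneg: "0 \<le> weighted_sup n"
  using weighted_abs_le_sup[of n 0] weighted_abs_nonneg[of n 0] by linarith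

definition weighted_mass :: "nat \<Rightarrow> real" where
  "weighted_mass n = (LINT x|lborel. weighted_abs n x)"

lemma weighted_mass_nonneg: "0 \<le> weighted_mass n"
  unfolding weighted_mass_def by (intro integral_nonneg_AE) (auto simp: weighted_abs_nonneg)

lemma integrable_if_le_weighted_abs:
  assumes "g \<in> borel_measurable lborel" "\<And>x. \<bar>g x\<bar> \<le> c * weighted_abs n x"
  shows "integrable lborel g"
proof (rule Bochner_Integration.integrable_bound[OF _ assms(1)])
  show "integrable lborel (\<lambda>x. c * weighted_abs n x)"
    using weighted_abs_integrable by simp
  show "AE x in lborel. norm (g x) \<le> norm (c * weighted_abs n x)"
  proof (intro AE_I2)
    fix x
    show "norm (g x) \<le> norm (c * weighted_abs n x)"
      using assms(2)[of x] by simp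
  qed
qed

lemma psi_integrable: "integrable lborel \<psi>"
  by (rule integrable_if_le_weighted_abs[of _ 1 0]) (auto simp: weighted_abs_def)

lemma first_moment_integrable: "integrable lborel (\<lambda>x. x * \<psi> x)"
  by (rule integrable_if_le_weighted_abs[of _ 1 1])
     (auto simp: weighted_abs_def abs_mult intro!: mult_right_mono)

lemma abs_second_moment_integrable: "integrable lborel (\<lambda>x. x^2 * \<bar>\<psi> x\<bar>)"
proof (rule integrable_if_le_weighted_abs[of _ 1 2])
  fix x :: real
  have "x^2 \<le> (1 + \<bar>x\<bar>)^2" by (simp add: power2_eq_square algebra_simps)
  then show "\<bar>x\<^sup>2 * \<bar>\<psi> x\<bar>\<bar> \<le> 1 * weighted_abs 2 x"
    by (simp add: weighted_abs_def abs_mult mult_right_mono)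
qed simp

lemma fourier_integrand_integrable:
  "integrable lborel (\<lambda>x. complex_of_real (\<psi> x) * cis (- \<xi> * x))"
proof (rule Bochner_Integration.integrable_bound[OF psi_integrable])
  show "(\<lambda>x. complex_of_real (\<psi> x) * cis (- \<xi> * x)) \<in> borel_measurable lborel"
    using borel_measurable_continuous_onI[of "\<lambda>x. cis (- \<xi> * x)"]
    by (auto simp: cis_conv_exp intro!: continuous_intros)
  show "AE x in lborel. norm (complex_of_real (\<psi> x) * cis (- \<xi> * x)) \<le> norm (\<psi> x)"
    by (auto simp: norm_mult)
qed

lemma integral_cos_eq_Re_fourier: "(LINT x|lborel. \<psi> x * cos (\<xi> * x)) = Re (fourier \<psi> \<xi>)"
  using integral_bounded_linear[OF bounded_linear_Re fourier_integrand_integrable]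
  by (simp add: fourier_def)

lemma integral_sin_eq_Im_fourier: "(LINT x|lborel. \<psi> x * sin (\<xi> * x)) = - Im (fourier \<psi> \<xi>)"
proof -
  have "Im (fourier \<psi> \<xi>) = (LINT x|lborel. Im (complex_of_real (\<psi> x) * cis (- \<xi> * x)))"
    unfolding fourier_def
    by (rule integral_bounded_linear[OF bounded_linear_Im fourier_integrand_integrable, symmetric])
  then show ?thesis by simp
qed

lemma abs_sin_minus_self_le: "\<bar>sin u - u\<bar> \<le> (u::real)^2 / 2"
proof -
  have "cmod (iexp u - (\<Sum>k \<le> 1. (\<i> * u)^k / fact k)) \<le> \<bar>u\<bar>^2 / fact 2"
    using iexp_approx1[of u 1] by (simp add: numeral_2_eq_2)
  moreover have "Im (iexp u - (\<Sum>k \<le> 1. (\<i> * u)^k / fact k)) = sin u - u"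
    by (simp add: Im_exp)
  ultimately show ?thesis
    using abs_Im_le_cmod[of "iexp u - (\<Sum>k \<le> 1. (\<i> * u)^k / fact k)"] by simp
qed

text \<open>Expanding \<open>sin (\<xi> x) = \<xi> x + O(\<xi>\<^sup>2 x\<^sup>2)\<close> in \<open>Im (fourier \<psi> \<xi>) = 0\<close>.\<close>

lemma first_moment_le_if_fourier_zero:
  assumes "fourier \<psi> \<xi> = 0"
  shows "\<bar>\<xi> * (LINT x|lborel. x * \<psi> x)\<bar> \<le> \<xi>^2 / 2 * (LINT x|lborel. x^2 * \<bar>\<psi> x\<bar>)"
proof -
  have sin_integrable: "integrable lborel (\<lambda>x. \<psi> x * sin (\<xi> * x))"
    by (rule integrable_if_le_weighted_abs[of _ 1 0])
       (auto simp: weighted_abs_def abs_mult intro!: mult_left_le)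
  have "\<xi> * (LINT x|lborel. x * \<psi> x)
      = (LINT x|lborel. \<xi> * (x * \<psi> x)) - (LINT x|lborel. \<psi> x * sin (\<xi> * x))"
    using integral_sin_eq_Im_fourier[of \<xi>] assms by simp
  also have "\<dots> = (LINT x|lborel. \<xi> * (x * \<psi> x) - \<psi> x * sin (\<xi> * x))"
    using integrable_mult_right[OF first_moment_integrable] sin_integrable
    by (rule Bochner_Integration.integral_diff[symmetric])
  also have "\<dots> = (LINT x|lborel. \<psi> x * (\<xi> * x - sin (\<xi> * x)))"
    by (simp add: algebra_simps)
  finally have "\<bar>\<xi> * (LINT x|lborel. x * \<psi> x)\<bar>
      \<le> (LINT x|lborel. norm (\<psi> x * (\<xi> * x - sin (\<xi> * x))))"
    using integral_norm_bound[of lborel "\<lambda>x. \<psi> x * (\<xi> * x - sin (\<xi> * x))"] by simp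
  also have "\<dots> \<le> (LINT x|lborel. \<xi>^2 / 2 * (x^2 * \<bar>\<psi> x\<bar>))"
  proof (rule integral_mono')
    show "integrable lborel (\<lambda>x. \<xi>^2 / 2 * (x^2 * \<bar>\<psi> x\<bar>))"
      using abs_second_moment_integrable by simp
    fix x :: real
    have "norm (\<psi> x * (\<xi> * x - sin (\<xi> * x))) = \<bar>\<psi> x\<bar> * \<bar>sin (\<xi> * x) - \<xi> * x\<bar>"
      by (simp add: abs_mult abs_minus_commute)
    also have "\<dots> \<le> \<bar>\<psi> x\<bar> * ((\<xi> * x)^2 / 2)"
      using abs_sin_minus_self_le[of "\<xi> * x"] by (intro mult_left_mono) auto
    also have "\<dots> = \<xi>^2 / 2 * (x^2 * \<bar>\<psi> x\<bar>)"
      by (simp add: power_mult_distrib)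
    finally show "norm (\<psi> x * (\<xi> * x - sin (\<xi> * x))) \<le> \<xi>^2 / 2 * (x^2 * \<bar>\<psi> x\<bar>)" .
  qed simp
  finally show ?thesis by simp
qed

lemma moments_vanish_if_fourier_vanishes_near_zero:
  assumes "0 < \<delta>" and vanish: "\<And>\<xi>. \<bar>\<xi>\<bar> < \<delta> \<Longrightarrow> fourier \<psi> \<xi> = 0"
  shows "(LINT x|lborel. \<psi> x) = 0" "(LINT x|lborel. x * \<psi> x) = 0"
proof -
  show "(LINT x|lborel. \<psi> x) = 0"
    using integral_cos_eq_Re_fourier[of 0] vanish[of 0] assms(1) by simp
  define c where "c = (LINT x|lborel. x * \<psi> x)"
  define M where "M = (LINT x|lborel. x^2 * \<bar>\<psi> x\<bar>)"
  have M_nonneg: "0 \<le> M" unfolding M_def by (intro integral_nonneg_AE) auto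
  show "c = 0" unfolding c_def[symmetric]
  proof (rule ccontr)
    assume "c \<noteq> 0"
    define \<xi> where "\<xi> = min (\<delta> / 2) (\<bar>c\<bar> / (M + 1))"
    have \<xi>: "0 < \<xi>" "\<xi> < \<delta>" "\<xi> \<le> \<bar>c\<bar> / (M + 1)"
      using \<open>c \<noteq> 0\<close> M_nonneg assms(1) by (auto simp: \<xi>_def)
    then have "\<xi> * \<bar>c\<bar> \<le> \<xi> * (\<xi> * M / 2)"
      using first_moment_le_if_fourier_zero[OF vanish, of \<xi>]
      by (simp add: c_def M_def abs_mult power2_eq_square field_simps)
    then have "\<bar>c\<bar> \<le> \<xi> * M / 2" using \<xi>(1) by (meson mult_le_cancel_left_pos)
    also have "\<dots> \<le> \<bar>c\<bar> / (M + 1) * M / 2"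
      using \<xi>(3) M_nonneg by (intro divide_right_mono mult_right_mono) auto
    also have "\<dots> < \<bar>c\<bar>"
    proof -
      have "0 \<le> \<bar>c\<bar> * M" "0 < \<bar>c\<bar>" using \<open>c \<noteq> 0\<close> M_nonneg by auto
      then have "\<bar>c\<bar> * M < \<bar>c\<bar> * (M + 1) * 2" by (simp add: algebra_simps)
      then show ?thesis using M_nonneg by (simp add: field_simps)
    qed
    finally show False by simp
  qed
qed

end

locale two_vanishing_moments = schwartz_function +
  assumes integral_zero: "(LINT x|lborel. \<psi> x) = 0"
    and first_moment_zero: "(LINT x|lborel. x * \<psi> x) = 0"

lemma meyer_wavelet_two_vanishing_moments:
  assumes "meyer_wavelet \<psi>"
  shows "two_vanishing_moments \<psi>"
proof -
  interpret schwartz_function \<psi>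
    using assms by unfold_locales (simp add: meyer_wavelet_def)
  have "fourier \<psi> \<xi> = 0" if "\<bar>\<xi>\<bar> < 2 * pi / 3" for \<xi>
    using assms that by (simp add: meyer_wavelet_def)
  then show ?thesis
    using moments_vanish_if_fourier_vanishes_near_zero[of "2 * pi / 3"]
    by unfold_locales auto
qed

section \<open>Decay of the fractional integral\<close>

lemma powr_taylor_remainder_far:
  fixes a y :: real
  assumes a: "-1 < a" "a < 0" and y: "y \<le> -1"
  shows "\<bar>(1 - y) powr a - 1 + a * y\<bar> \<le> 8 * y^2"
proof -
  have "(1 - y) powr a \<le> (1 - y) powr 0" using a y by (intro powr_mono) auto
  then have p1: "(1 - y) powr a \<le> 1" using y by simp
  have ay0: "0 \<le> a * y" using a y by (intro mult_nonpos_nonpos) auto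
  have "(a + 1) * y \<le> 0" using a y by (intro mult_nonneg_nonpos) auto
  then have ay1: "a * y \<le> - y" by (simp add: algebra_simps)
  have "\<bar>(1 - y) powr a - 1 + a * y\<bar> \<le> 2 + \<bar>y\<bar>"
    unfolding abs_le_iff using p1 ay0 ay1 y powr_ge_zero[of "1 - y" a] by linarith
  also have "\<dots> \<le> 3 * y^2"
  proof -
    have "\<bar>y\<bar> * 1 \<le> \<bar>y\<bar> * \<bar>y\<bar>" using y by (intro mult_left_mono) auto
    then show ?thesis using y by (simp add: power2_eq_square)
  qed
  finally show ?thesis by simp
qed

lemma powr_taylor_remainder_near:
  fixes a y :: real
  assumes a: "-1 < a" "a < 0" and y: "-1 < y" "y \<le> 1/2" "y \<noteq> 0"
  shows "\<bar>(1 - y) powr a - 1 + a * y\<bar> \<le> 8 * y^2"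
proof -
  define cf :: "nat \<Rightarrow> real" where "cf m = (if m = 0 then 1 else if m = 1 then -a else a * (a - 1))" for m
  define diff where "diff m t = cf m * (1 - t) powr (a - real m)" for m t
  have diff0: "diff 0 = (\<lambda>t. (1 - t) powr a)" by (auto simp: diff_def cf_def)
  have "\<forall>m t. m < 2 \<and> -1 \<le> t \<and> t \<le> 1/2 \<longrightarrow> DERIV (diff m) t :> diff (Suc m) t"
  proof (intro allI impI)
    fix m :: nat and t :: real
    assume h: "m < 2 \<and> -1 \<le> t \<and> t \<le> 1/2"
    have "DERIV (\<lambda>t. 1 - t) t :> -1" by (auto intro!: derivative_eq_intros)
    then have "DERIV (\<lambda>t. (1 - t) powr (a - real m)) t :> (a - real m) * (1 - t) powr (a - real m - of_nat 1) * -1"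
      by (rule DERIV_fun_powr) (use h in auto)
    then have "DERIV (diff m) t :> cf m * ((a - real m) * (1 - t) powr (a - real m - of_nat 1) * -1)"
      unfolding diff_def by (rule DERIV_cmult)
    moreover have "cf m * ((a - real m) * (1 - t) powr (a - real m - of_nat 1) * -1) = diff (Suc m) t"
      using h by (auto simp: diff_def cf_def less_2_cases_iff algebra_simps)
    ultimately show "DERIV (diff m) t :> diff (Suc m) t" by simp
  qed
  then obtain t where t: "(if y < 0 then y < t \<and> t < 0 else 0 < t \<and> t < y)"
    and taylor: "(1 - y) powr a = (\<Sum>m<2. (diff m 0 / fact m) * (y - 0)^m) + (diff 2 t / fact 2) * (y - 0)^2"
    using Taylor[of 2 diff "\<lambda>t. (1 - t) powr a" "-1" "1/2" 0 y, OF _ diff0] y by auto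
  have t_range: "-1 \<le> t" "t \<le> 1/2" using t y by (auto split: if_splits)
  have "\<bar>diff 2 t\<bar> \<le> 16"
  proof -
    have "(1 - t) powr (a - 2) \<le> (1/2) powr (a - 2)"
      using t_range a by (intro powr_mono2') auto
    also have "(1/2::real) powr (a - 2) = 2 powr (2 - a)"
      by (simp add: powr_divide powr_minus_divide[symmetric] powr_minus)
    also have "\<dots> \<le> 2 powr 3" using a by (intro powr_mono) auto
    finally have "(1 - t) powr (a - 2) \<le> 8" by simp
    moreover have "\<bar>a * (a - 1)\<bar> \<le> 2"
      using a mult_mono[of "\<bar>a\<bar>" 1 "\<bar>a\<bar>" 1] by (simp add: abs_if algebra_simps)
    ultimately have "\<bar>a * (a - 1)\<bar> * (1 - t) powr (a - 2) \<le> 2 * 8"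
      by (intro mult_mono) auto
    then show ?thesis by (simp add: diff_def cf_def abs_mult)
  qed
  moreover have "\<bar>(1 - y) powr a - 1 + a * y\<bar> = \<bar>diff 2 t\<bar> / 2 * y^2"
    using taylor by (simp add: diff_def cf_def numeral_2_eq_2 abs_mult)
  moreover have "\<bar>diff 2 t\<bar> * y^2 \<le> 16 * y^2"
    using \<open>\<bar>diff 2 t\<bar> \<le> 16\<close> by (intro mult_right_mono) auto
  ultimately show ?thesis by simp
qed

lemma powr_taylor_remainder:
  fixes a y :: real
  assumes "-1 < a" "a < 0" "y \<le> 1/2"
  shows "\<bar>(1 - y) powr a - 1 + a * y\<bar> \<le> 8 * y^2"
  using powr_taylor_remainder_far[of a y] powr_taylor_remainder_near[of a y] assms
  by (cases "y \<le> -1"; cases "y = 0") auto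

lemma powr_taylor_remainder_scaled:
  fixes a t x :: real
  assumes a: "-1 < a" "a < 0" and t: "0 < t" and x: "x < t / 2"
  shows "\<bar>(t - x) powr a - t powr a + a * t powr (a - 1) * x\<bar> \<le> 8 * t powr (a - 2) * x^2"
proof -
  define y where "y = x / t"
  have y: "y \<le> 1/2" using x t by (simp add: y_def field_simps)
  have "t - x = t * (1 - y)" using t by (simp add: y_def field_simps)
  then have e1: "(t - x) powr a = t powr a * (1 - y) powr a"
    using y t by (simp add: powr_mult)
  have e2: "t powr (a - 1) * x = t powr a * y"
    using t by (simp add: powr_diff y_def)
  have e3: "t powr (a - 2) * x^2 = t powr a * y^2"
    using t by (simp add: powr_diff y_def power_divide powr_numeral)
  have "(t - x) powr a - t powr a + a * t powr (a - 1) * x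
      = t powr a * (1 - y) powr a - t powr a + a * (t powr a * y)"
    by (simp only: e1 mult.assoc e2)
  also have "\<dots> = t powr a * ((1 - y) powr a - 1 + a * y)" by (simp add: algebra_simps)
  finally have "\<bar>(t - x) powr a - t powr a + a * t powr (a - 1) * x\<bar>
      = t powr a * \<bar>(1 - y) powr a - 1 + a * y\<bar>"
    by (simp add: abs_mult)
  also have "\<dots> \<le> t powr a * (8 * y^2)"
    by (intro mult_left_mono powr_taylor_remainder) (use a y in auto)
  also have "\<dots> = 8 * (t powr (a - 2) * x^2)" by (simp add: e3)
  finally show ?thesis by simp
qed

definition unit_powr :: "real \<Rightarrow> real \<Rightarrow> real" where
  "unit_powr a u = indicator {0<..<1} u * u powr a"

definition unit_powr_mass :: "real \<Rightarrow> real" where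
  "unit_powr_mass a = (LINT u|lborel. unit_powr a u)"

lemma unit_powr_nonneg: "0 \<le> unit_powr a u"
  by (simp add: unit_powr_def)

lemma unit_powr_measurable[measurable]: "unit_powr a \<in> borel_measurable lborel"
  unfolding unit_powr_def by measurable

lemma unit_powr_integrable:
  assumes "-1 < a" shows "integrable lborel (unit_powr a)"
proof -
  have "(\<lambda>x. x powr a) integrable_on {0<..1}"
    by (rule integrable_on_powr_from_0') (use assms in auto)
  then have "(\<lambda>x. x powr a) absolutely_integrable_on {0<..1}"
    by (rule nonnegative_absolutely_integrable_1) auto
  then have "set_integrable lebesgue {0<..<1} (\<lambda>x::real. x powr a)"
    by (rule set_integrable_subset) auto
  then have "integrable lebesgue (unit_powr a)"
    unfolding set_integrable_def unit_powr_def by simp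
  then show ?thesis by (subst (asm) integrable_completion) auto
qed

lemma unit_powr_reflect_integrable:
  "-1 < a \<Longrightarrow> integrable lborel (\<lambda>x. unit_powr a (t - x))"
  using lborel_integrable_real_affine_iff[of "-1" "unit_powr a" t] unit_powr_integrable by simp

lemma integral_unit_powr_reflect:
  "(LINT x|lborel. unit_powr a (t - x)) = unit_powr_mass a"
  using lborel_integral_real_affine[of "-1" "unit_powr a" t] by (simp add: unit_powr_mass_def)

lemma unit_powr_mass_nonneg: "0 \<le> unit_powr_mass a"
  unfolding unit_powr_mass_def by (intro integral_nonneg_AE) (auto simp: unit_powr_nonneg)

text \<open>No integrability of \<open>f\<close> is needed: otherwise its integral is \<open>0\<close>.\<close>

lemma abs_integral_le_integral_dominant:
  fixes f G :: "real \<Rightarrow> real"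
  assumes "\<And>x. \<bar>f x\<bar> \<le> G x" "integrable lborel G"
  shows "\<bar>LINT x|lborel. f x\<bar> \<le> (LINT x|lborel. G x)"
proof -
  have "\<bar>LINT x|lborel. f x\<bar> \<le> (LINT x|lborel. norm (f x))"
    using integral_norm_bound[of lborel f] by simp
  also have "\<dots> \<le> (LINT x|lborel. G x)"
    using assms by (intro integral_mono') (auto intro: order_trans[OF abs_ge_zero])
  finally show ?thesis .
qed

lemma inverse_cube_le_powr:
  fixes b :: real
  assumes "1 \<le> b" shows "inverse (b ^ 3) \<le> b powr (-5/2)"
proof -
  have "inverse (b ^ 3) = b powr (-3)" using assms by (simp add: powr_minus powr_numeral)
  also have "\<dots> \<le> b powr (-5/2)" using assms by (intro powr_mono) auto
  finally show ?thesis .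
qed

lemma powr_le_shifted_powr:
  fixes a u :: real
  assumes "2 \<le> u" "a \<le> -1/2"
  shows "u powr (a - 2) \<le> 2 powr (5/2) * (1 + u) powr (-5/2)"
proof -
  have "u powr (a - 2) \<le> u powr (-5/2)" using assms by (intro powr_mono) auto
  also have "\<dots> \<le> ((1 + u) / 2) powr (-5/2)" using assms by (intro powr_mono2') auto
  also have "\<dots> = (1 + u) powr (-5/2) / 2 powr (-5/2)"
    using assms by (simp add: powr_divide)
  also have "\<dots> = 2 powr (5/2) * (1 + u) powr (-5/2)"
    by (simp add: powr_minus field_simps)
  finally show ?thesis .
qed

lemma inverse_cube_half_le:
  fixes u :: real
  assumes "0 \<le> u" shows "inverse ((1 + u/2) ^ 3) \<le> 8 * inverse ((1 + u) ^ 3)"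
proof -
  have "(1 + u) ^ 3 \<le> (2 + u) ^ 3" using assms by (intro power_mono) auto
  moreover have "(2 + u) ^ 3 = 8 * (1 + u/2) ^ 3" by (simp add: power3_eq_cube algebra_simps)
  ultimately have "(1 + u) ^ 3 \<le> 8 * (1 + u/2) ^ 3" by simp
  then show ?thesis using assms by (simp add: field_simps)
qed

context schwartz_function
begin

definition frac_integrand :: "real \<Rightarrow> real \<Rightarrow> real \<Rightarrow> real" where
  "frac_integrand a t x = (if x < t then (t - x) powr a else 0) * \<psi> x"

lemma psiH_eq_frac_integral:
  "psiH \<psi> H u = (1 / Gamma (H - 1/2)) * (LINT x|lborel. frac_integrand (H - 3/2) u x)"
  by (simp add: psiH_def frac_integrand_def)

lemma abs_frac_integrand_le:
  assumes "a \<le> 0"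
  shows "\<bar>frac_integrand a t x\<bar> \<le> unit_powr a (t - x) * \<bar>\<psi> x\<bar> + \<bar>\<psi> x\<bar>"
proof (cases "t - 1 < x \<and> x < t")
  case True
  then show ?thesis by (simp add: frac_integrand_def unit_powr_def abs_mult)
next
  case False
  have "(t - x) powr a \<le> 1" if "x < t"
    using False that assms powr_mono[of a 0 "t - x"] by auto
  then have "\<bar>frac_integrand a t x\<bar> \<le> \<bar>\<psi> x\<bar>"
    by (auto simp: frac_integrand_def abs_mult mult_left_le_one_le)
  then show ?thesis using unit_powr_nonneg[of a "t - x"] by (simp add: add_increasing)
qed

lemma frac_integral_decay_near:
  assumes "-1 < a" "a \<le> 0" "\<bar>t\<bar> \<le> 2"
  shows "\<bar>LINT x|lborel. frac_integrand a t x\<bar>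
    \<le> 3 powr (5/2) * (weighted_sup 0 * unit_powr_mass a + weighted_mass 0) * (1 + \<bar>t\<bar>) powr (-5/2)"
proof -
  have "\<bar>LINT x|lborel. frac_integrand a t x\<bar>
      \<le> (LINT x|lborel. weighted_sup 0 * unit_powr a (t - x) + weighted_abs 0 x)"
  proof (rule abs_integral_le_integral_dominant)
    show "integrable lborel (\<lambda>x. weighted_sup 0 * unit_powr a (t - x) + weighted_abs 0 x)"
      using unit_powr_reflect_integrable[OF assms(1)] weighted_abs_integrable by auto
    fix x
    have "unit_powr a (t - x) * \<bar>\<psi> x\<bar> \<le> unit_powr a (t - x) * weighted_sup 0"
      using weighted_abs_le_sup[of 0 x]
      by (intro mult_left_mono) (auto simp: weighted_abs_def unit_powr_nonneg)
    then show "\<bar>frac_integrand a t x\<bar> \<le> weighted_sup 0 * unit_powr a (t - x) + weighted_abs 0 x"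
      using abs_frac_integrand_le[OF assms(2), of t x] by (simp add: weighted_abs_def algebra_simps)
  qed
  also have "\<dots> = weighted_sup 0 * unit_powr_mass a + weighted_mass 0"
    using unit_powr_reflect_integrable[OF assms(1), of t] weighted_abs_integrable[of 0]
    by (simp add: integral_unit_powr_reflect weighted_mass_def)
  also have "\<dots> \<le> (weighted_sup 0 * unit_powr_mass a + weighted_mass 0) * (3 powr (5/2) * (1 + \<bar>t\<bar>) powr (-5/2))"
  proof -
    have "3 powr (-5/2) \<le> (1 + \<bar>t\<bar>) powr (-5/2)" using assms by (intro powr_mono2') auto
    then have "3 powr (5/2) * 3 powr (-5/2) \<le> 3 powr (5/2) * (1 + \<bar>t\<bar>) powr (-5/2)"
      by (intro mult_left_mono) auto
    moreover have "3 powr (5/2) * 3 powr (-5/2) = (1::real)" by (simp add: powr_add[symmetric])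
    ultimately have one: "1 \<le> 3 powr (5/2) * (1 + \<bar>t\<bar>) powr (-5/2)" by linarith
    have "0 \<le> weighted_sup 0 * unit_powr_mass a + weighted_mass 0"
      by (simp add: weighted_sup_nonneg unit_powr_mass_nonneg weighted_mass_nonneg)
    from mult_left_mono[OF one this] show ?thesis by simp
  qed
  finally show ?thesis by (simp add: algebra_simps)
qed

lemma frac_integral_decay_left:
  assumes "-1 < a" "a \<le> 0" "t \<le> -1"
  shows "\<bar>LINT x|lborel. frac_integrand a t x\<bar>
    \<le> (weighted_sup 3 * unit_powr_mass a + weighted_mass 3) * (1 + \<bar>t\<bar>) powr (-5/2)"
proof -
  have "\<bar>LINT x|lborel. frac_integrand a t x\<bar>
      \<le> (LINT x|lborel. inverse ((1 + \<bar>t\<bar>) ^ 3) * (weighted_sup 3 * unit_powr a (t - x) + weighted_abs 3 x))"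
  proof (rule abs_integral_le_integral_dominant)
    show "integrable lborel (\<lambda>x. inverse ((1 + \<bar>t\<bar>) ^ 3) * (weighted_sup 3 * unit_powr a (t - x) + weighted_abs 3 x))"
      using unit_powr_reflect_integrable[OF assms(1)] weighted_abs_integrable by auto
    fix x
    show "\<bar>frac_integrand a t x\<bar> \<le> inverse ((1 + \<bar>t\<bar>) ^ 3) * (weighted_sup 3 * unit_powr a (t - x) + weighted_abs 3 x)"
    proof (cases "x < t")
      case True
      have "(1 + \<bar>t\<bar>) ^ 3 * \<bar>frac_integrand a t x\<bar>
          \<le> (1 + \<bar>x\<bar>) ^ 3 * (unit_powr a (t - x) * \<bar>\<psi> x\<bar> + \<bar>\<psi> x\<bar>)"
        using True assms(3) abs_frac_integrand_le[OF assms(2), of t x]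
        by (intro mult_mono power_mono) (auto simp: unit_powr_nonneg)
      also have "\<dots> = unit_powr a (t - x) * weighted_abs 3 x + weighted_abs 3 x"
        by (simp add: weighted_abs_def algebra_simps)
      also have "\<dots> \<le> weighted_sup 3 * unit_powr a (t - x) + weighted_abs 3 x"
        using mult_left_mono[OF weighted_abs_le_sup[of 3 x] unit_powr_nonneg[of a "t - x"]]
        by (simp add: mult.commute)
      finally show ?thesis by (simp add: field_simps)
    qed (simp add: frac_integrand_def weighted_sup_nonneg unit_powr_nonneg weighted_abs_nonneg)
  qed
  also have "\<dots> = inverse ((1 + \<bar>t\<bar>) ^ 3) * (weighted_sup 3 * unit_powr_mass a + weighted_mass 3)"
    using unit_powr_reflect_integrable[OF assms(1), of t] weighted_abs_integrable[of 3]
    by (simp add: integral_unit_powr_reflect weighted_mass_def)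
  also have "\<dots> \<le> (1 + \<bar>t\<bar>) powr (-5/2) * (weighted_sup 3 * unit_powr_mass a + weighted_mass 3)"
    by (intro mult_right_mono inverse_cube_le_powr)
       (auto simp: weighted_sup_nonneg unit_powr_mass_nonneg weighted_mass_nonneg)
  finally show ?thesis by (simp add: mult.commute)
qed

end

context two_vanishing_moments
begin

definition taylor_integrand :: "real \<Rightarrow> real \<Rightarrow> real \<Rightarrow> real" where
  "taylor_integrand a t x = \<psi> x * (t powr a - a * t powr (a - 1) * x)"

lemma taylor_integrand_integrable: "integrable lborel (taylor_integrand a t)"
proof -
  have "integrable lborel (\<lambda>x. t powr a * \<psi> x - (a * t powr (a - 1)) * (x * \<psi> x))"
    using psi_integrable first_moment_integrable by auto
  then show ?thesis unfolding taylor_integrand_def by (simp add: algebra_simps)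
qed

lemma integral_taylor_integrand: "(LINT x|lborel. taylor_integrand a t x) = 0"
proof -
  have "(LINT x|lborel. taylor_integrand a t x)
      = (LINT x|lborel. t powr a * \<psi> x - (a * t powr (a - 1)) * (x * \<psi> x))"
    unfolding taylor_integrand_def by (simp add: algebra_simps)
  also have "\<dots> = 0"
    using psi_integrable first_moment_integrable by (simp add: integral_zero first_moment_zero)
  finally show ?thesis .
qed

lemma frac_minus_taylor_integrand_near:
  assumes "-1 < a" "a < 0" "2 \<le> t" "x < t / 2"
  shows "\<bar>frac_integrand a t x - taylor_integrand a t x\<bar> \<le> 8 * t powr (a - 2) * weighted_abs 2 x"
proof -
  have "frac_integrand a t x - taylor_integrand a t x
      = \<psi> x * ((t - x) powr a - t powr a + a * t powr (a - 1) * x)"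
    using assms by (simp add: frac_integrand_def taylor_integrand_def algebra_simps)
  then have "\<bar>frac_integrand a t x - taylor_integrand a t x\<bar>
      = \<bar>\<psi> x\<bar> * \<bar>(t - x) powr a - t powr a + a * t powr (a - 1) * x\<bar>"
    by (simp add: abs_mult)
  also have "\<dots> \<le> \<bar>\<psi> x\<bar> * (8 * t powr (a - 2) * x^2)"
    using assms by (intro mult_left_mono powr_taylor_remainder_scaled) auto
  also have "\<dots> \<le> 8 * t powr (a - 2) * ((1 + \<bar>x\<bar>)^2 * \<bar>\<psi> x\<bar>)"
  proof -
    have "x^2 \<le> (1 + \<bar>x\<bar>)^2" by (simp add: power2_eq_square algebra_simps)
    then have "x^2 * \<bar>\<psi> x\<bar> \<le> (1 + \<bar>x\<bar>)^2 * \<bar>\<psi> x\<bar>" by (rule mult_right_mono) simp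
    from mult_left_mono[OF this, of "8 * t powr (a - 2)"] show ?thesis
      by (simp add: algebra_simps)
  qed
  finally show ?thesis by (simp add: weighted_abs_def)
qed

lemma frac_minus_taylor_integrand_far:
  assumes "-1 < a" "a < 0" "2 \<le> t" "t / 2 \<le> x"
  shows "\<bar>frac_integrand a t x - taylor_integrand a t x\<bar>
    \<le> inverse ((1 + t/2) ^ 3) * (weighted_sup 3 * unit_powr a (t - x) + 2 * weighted_abs 4 x)"
proof -
  have "t powr a \<le> 1" "t powr (a - 1) \<le> 1"
    using assms powr_mono[of a 0 t] powr_mono[of "a - 1" 0 t] by auto
  then have "t powr a + \<bar>a\<bar> * t powr (a - 1) * \<bar>x\<bar> \<le> 1 + 1 * 1 * \<bar>x\<bar>"
    using assms by (intro add_mono mult_mono) auto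
  then have "\<bar>t powr a - a * t powr (a - 1) * x\<bar> \<le> 1 + \<bar>x\<bar>"
    using abs_triangle_ineq4[of "t powr a" "a * t powr (a - 1) * x"] by (simp add: abs_mult)
  then have "\<bar>taylor_integrand a t x\<bar> \<le> \<bar>\<psi> x\<bar> * (1 + \<bar>x\<bar>)"
    unfolding taylor_integrand_def abs_mult by (intro mult_left_mono) auto
  then have "\<bar>frac_integrand a t x - taylor_integrand a t x\<bar>
      \<le> unit_powr a (t - x) * \<bar>\<psi> x\<bar> + \<bar>\<psi> x\<bar> + \<bar>\<psi> x\<bar> * (1 + \<bar>x\<bar>)"
    using abs_frac_integrand_le[of a t x] assms by linarith
  then have "(1 + t/2) ^ 3 * \<bar>frac_integrand a t x - taylor_integrand a t x\<bar>
      \<le> (1 + \<bar>x\<bar>) ^ 3 * (unit_powr a (t - x) * \<bar>\<psi> x\<bar> + \<bar>\<psi> x\<bar> + \<bar>\<psi> x\<bar> * (1 + \<bar>x\<bar>))"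
    using assms by (intro mult_mono power_mono) (auto simp: unit_powr_nonneg)
  also have "\<dots> = unit_powr a (t - x) * weighted_abs 3 x + weighted_abs 3 x + weighted_abs 4 x"
    by (simp add: weighted_abs_def power_Suc2[symmetric] numeral_eq_Suc algebra_simps)
  also have "\<dots> \<le> weighted_sup 3 * unit_powr a (t - x) + 2 * weighted_abs 4 x"
    using weighted_abs_le_sup[of 3 x] weighted_abs_mono[of 3 4 x]
      mult_left_mono[OF weighted_abs_le_sup[of 3 x] unit_powr_nonneg[of a "t - x"]]
    by (simp add: mult.commute)
  finally show ?thesis using assms by (simp add: field_simps)
qed

lemma abs_frac_integral_le_right:
  assumes "-1 < a" "a < 0" "2 \<le> t"
  shows "\<bar>LINT x|lborel. frac_integrand a t x\<bar> \<le> 8 * t powr (a - 2) * weighted_mass 2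
    + inverse ((1 + t/2) ^ 3) * (weighted_sup 3 * unit_powr_mass a + 2 * weighted_mass 4)"
proof -
  define G where "G x = 8 * t powr (a - 2) * weighted_abs 2 x
    + inverse ((1 + t/2) ^ 3) * (weighted_sup 3 * unit_powr a (t - x) + 2 * weighted_abs 4 x)" for x
  have G_integrable: "integrable lborel G"
    unfolding G_def using unit_powr_reflect_integrable[OF assms(1)] weighted_abs_integrable by auto
  have "\<bar>frac_integrand a t x - taylor_integrand a t x\<bar> \<le> G x" for x
  proof -
    have "0 \<le> 8 * t powr (a - 2) * weighted_abs 2 x"
      "0 \<le> inverse ((1 + t/2) ^ 3) * (weighted_sup 3 * unit_powr a (t - x) + 2 * weighted_abs 4 x)"
      using assms by (auto simp: weighted_abs_nonneg weighted_sup_nonneg unit_powr_nonneg)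
    moreover have "x < t / 2 \<or> t / 2 \<le> x" by linarith
    ultimately show ?thesis
      using frac_minus_taylor_integrand_near[of a t x] frac_minus_taylor_integrand_far[of a t x] assms
      unfolding G_def by linarith
  qed
  then have "\<bar>LINT x|lborel. frac_integrand a t x - taylor_integrand a t x\<bar> \<le> (LINT x|lborel. G x)"
    using G_integrable by (rule abs_integral_le_integral_dominant)
  moreover have "(LINT x|lborel. frac_integrand a t x) = (LINT x|lborel. frac_integrand a t x - taylor_integrand a t x)"
    if "integrable lborel (frac_integrand a t)"
    using that taylor_integrand_integrable by (simp add: integral_taylor_integrand)
  moreover have "0 \<le> (LINT x|lborel. G x)"
    unfolding G_def using assms
    by (intro integral_nonneg_AE AE_I2 add_nonneg_nonneg mult_nonneg_nonneg)
       (auto simp: weighted_abs_nonneg weighted_sup_nonneg unit_powr_nonneg)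
  ultimately have "\<bar>LINT x|lborel. frac_integrand a t x\<bar> \<le> (LINT x|lborel. G x)"
    by (cases "integrable lborel (frac_integrand a t)") (auto simp: not_integrable_integral_eq)
  also have "\<dots> = 8 * t powr (a - 2) * weighted_mass 2
      + inverse ((1 + t/2) ^ 3) * (weighted_sup 3 * unit_powr_mass a + 2 * weighted_mass 4)"
    unfolding G_def using unit_powr_reflect_integrable[OF assms(1), of t] weighted_abs_integrable
    by (simp add: integral_unit_powr_reflect weighted_mass_def)
  finally show ?thesis .
qed

lemma frac_integral_decay_right:
  assumes "-1 < a" "a \<le> -1/2" "2 \<le> t"
  shows "\<bar>LINT x|lborel. frac_integrand a t x\<bar>
    \<le> 8 * (2 powr (5/2) * weighted_mass 2 + weighted_sup 3 * unit_powr_mass a + 2 * weighted_mass 4)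
        * (1 + \<bar>t\<bar>) powr (-5/2)"
proof -
  have "\<bar>LINT x|lborel. frac_integrand a t x\<bar> \<le> 8 * t powr (a - 2) * weighted_mass 2
      + inverse ((1 + t/2) ^ 3) * (weighted_sup 3 * unit_powr_mass a + 2 * weighted_mass 4)"
    using assms by (intro abs_frac_integral_le_right) auto
  also have "\<dots> \<le> 8 * (2 powr (5/2) * (1 + t) powr (-5/2)) * weighted_mass 2
      + (8 * (1 + t) powr (-5/2)) * (weighted_sup 3 * unit_powr_mass a + 2 * weighted_mass 4)"
  proof (intro add_mono mult_right_mono mult_left_mono)
    show "t powr (a - 2) \<le> 2 powr (5/2) * (1 + t) powr (-5/2)"
      using assms by (intro powr_le_shifted_powr) auto
    have "inverse ((1 + t/2) ^ 3) \<le> 8 * inverse ((1 + t) ^ 3)"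
      using assms by (intro inverse_cube_half_le) auto
    also have "\<dots> \<le> 8 * (1 + t) powr (-5/2)"
      using assms by (intro mult_left_mono inverse_cube_le_powr) auto
    finally show "inverse ((1 + t/2) ^ 3) \<le> 8 * (1 + t) powr (-5/2)" .
  qed (auto simp: weighted_mass_nonneg weighted_sup_nonneg unit_powr_mass_nonneg)
  also have "\<dots> = 8 * (2 powr (5/2) * weighted_mass 2 + weighted_sup 3 * unit_powr_mass a
      + 2 * weighted_mass 4) * (1 + t) powr (-5/2)"
    by (simp add: algebra_simps)
  finally show ?thesis using assms by simp
qed

lemma frac_integral_decay:
  assumes "-1 < a" "a \<le> -1/2"
  shows "\<exists>K\<ge>0. \<forall>t. \<bar>LINT x|lborel. frac_integrand a t x\<bar> \<le> K * (1 + \<bar>t\<bar>) powr (-5/2)"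
proof -
  define K\<^sub>0 where "K\<^sub>0 = 3 powr (5/2) * (weighted_sup 0 * unit_powr_mass a + weighted_mass 0)"
  define K\<^sub>1 where "K\<^sub>1 = weighted_sup 3 * unit_powr_mass a + weighted_mass 3"
  define K\<^sub>2 where "K\<^sub>2 = 8 * (2 powr (5/2) * weighted_mass 2 + weighted_sup 3 * unit_powr_mass a
    + 2 * weighted_mass 4)"
  have nonneg: "0 \<le> K\<^sub>0" "0 \<le> K\<^sub>1" "0 \<le> K\<^sub>2"
    unfolding K\<^sub>0_def K\<^sub>1_def K\<^sub>2_def
    by (auto simp: weighted_sup_nonneg unit_powr_mass_nonneg weighted_mass_nonneg)
  have "\<bar>LINT x|lborel. frac_integrand a t x\<bar> \<le> (K\<^sub>0 + K\<^sub>1 + K\<^sub>2) * (1 + \<bar>t\<bar>) powr (-5/2)" for t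
  proof -
    have "\<exists>K \<in> {K\<^sub>0, K\<^sub>1, K\<^sub>2}. \<bar>LINT x|lborel. frac_integrand a t x\<bar> \<le> K * (1 + \<bar>t\<bar>) powr (-5/2)"
    proof (cases "\<bar>t\<bar> \<le> 2")
      case True
      then show ?thesis
        using frac_integral_decay_near[of a t] assms by (auto simp: K\<^sub>0_def algebra_simps)
    next
      case False
      then show ?thesis
        using frac_integral_decay_left[of a t] frac_integral_decay_right[of a t] assms
        by (cases "t < 0") (auto simp: K\<^sub>1_def K\<^sub>2_def)
    qed
    moreover have "K * (1 + \<bar>t\<bar>) powr (-5/2) \<le> (K\<^sub>0 + K\<^sub>1 + K\<^sub>2) * (1 + \<bar>t\<bar>) powr (-5/2)"
      if "K \<in> {K\<^sub>0, K\<^sub>1, K\<^sub>2}" for K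
      using that nonneg by (intro mult_right_mono) auto
    ultimately show ?thesis by (meson order_trans)
  qed
  with nonneg show ?thesis by (intro exI[of _ "K\<^sub>0 + K\<^sub>1 + K\<^sub>2"]) auto
qed

lemma psiH_decay:
  assumes "1/2 < H" "H < 1"
  shows "\<exists>K\<ge>0. \<forall>u. \<bar>psiH \<psi> H u\<bar> \<le> K * (1 + \<bar>u\<bar>) powr (-5/2)"
proof -
  obtain K where K: "K \<ge> 0" "\<And>u. \<bar>LINT x|lborel. frac_integrand (H - 3/2) u x\<bar> \<le> K * (1 + \<bar>u\<bar>) powr (-5/2)"
    using frac_integral_decay[of "H - 3/2"] assms by auto
  have "\<bar>psiH \<psi> H u\<bar> \<le> (\<bar>1 / Gamma (H - 1/2)\<bar> * K) * (1 + \<bar>u\<bar>) powr (-5/2)" for u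
    using mult_left_mono[OF K(2)[of u], of "\<bar>1 / Gamma (H - 1/2)\<bar>"]
    by (simp add: psiH_eq_frac_integral abs_mult)
  with K(1) show ?thesis by (intro exI[of _ "\<bar>1 / Gamma (H - 1/2)\<bar> * K"]) auto
qed

end

section \<open>Logarithmic weights and lattice sums\<close>

lemma one_le_ln:
  assumes "3 \<le> (A::real)" shows "1 \<le> ln A"
proof -
  have "exp 1 \<le> A" using exp_le assms by linarith
  then have "ln (exp 1) \<le> ln A" using assms by (subst ln_le_cancel_iff) auto
  then show ?thesis by simp
qed

lemma sqrt_ln_le_powr_quarter:
  assumes "1 \<le> (y::real)" shows "sqrt (ln y) \<le> 2 * y powr (1/4)"
proof -
  have "ln (y powr (1/2)) \<le> y powr (1/2) - 1" using assms by (intro ln_le_minus_one) auto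
  then have "ln y \<le> 2 * y powr (1/2)" using assms by (simp add: ln_powr)
  then have "sqrt (ln y) \<le> sqrt (2 * y powr (1/2))" by simp
  also have "\<dots> = sqrt 2 * sqrt (y powr (1/2))" by (simp add: real_sqrt_mult)
  also have "sqrt (y powr (1/2)) = y powr (1/4)"
    using assms by (simp add: powr_half_sqrt[symmetric] powr_powr)
  also have "sqrt 2 \<le> (2::real)"
    using real_sqrt_le_mono[of 2 "2^2"] by simp
  finally show ?thesis by (simp add: mult_right_mono)
qed

definition log_scale :: "int \<Rightarrow> real" where
  "log_scale j = sqrt (ln (3 + real_of_int \<bar>j\<bar> + 2 powr real_of_int j))"

lemma log_scale_ge_one: "1 \<le> log_scale j"
  unfolding log_scale_def by (simp add: one_le_ln)

lemma log_scale_nonneg: "0 \<le> log_scale j"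
  using log_scale_ge_one[of j] by linarith

text \<open>On \<open>[0, 1]\<close> we have \<open>\<bar>k\<bar> \<le> \<bar>2^j x - k\<bar> + 2^j\<close>, so the index \<open>k\<close> of the weight can be
  traded for the distance to the centre of the wavelet.\<close>

lemma sqrt_ln_index_le:
  fixes j k :: int and x :: real
  assumes "0 \<le> x" "x \<le> 1"
  shows "sqrt (ln (3 + real_of_int \<bar>j\<bar> + real_of_int \<bar>k\<bar>))
    \<le> 3 * log_scale j * (1 + \<bar>2 powr real_of_int j * x - real_of_int k\<bar>) powr (1/4)"
proof -
  define u where "u = 2 powr real_of_int j * x - real_of_int k"
  define A where "A = 3 + real_of_int \<bar>j\<bar> + 2 powr real_of_int j"
  define w where "w = (1 + \<bar>u\<bar>) powr (1/4)"
  have A: "3 \<le> A" unfolding A_def by simp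
  have w: "1 \<le> w" unfolding w_def by (rule ge_one_powr_ge_zero) auto
  have "2 powr real_of_int j * x \<le> 2 powr real_of_int j" "0 \<le> 2 powr real_of_int j * x"
    using assms by auto
  then have "real_of_int \<bar>k\<bar> \<le> \<bar>u\<bar> + 2 powr real_of_int j"
    unfolding u_def by linarith
  moreover have "\<bar>u\<bar> \<le> A * \<bar>u\<bar>" using A by (simp add: mult_le_cancel_right1)
  ultimately have "3 + real_of_int \<bar>j\<bar> + real_of_int \<bar>k\<bar> \<le> A + A * \<bar>u\<bar>"
    unfolding A_def by linarith
  then have "3 + real_of_int \<bar>j\<bar> + real_of_int \<bar>k\<bar> \<le> A * (1 + \<bar>u\<bar>)"
    by (simp add: algebra_simps)
  then have "ln (3 + real_of_int \<bar>j\<bar> + real_of_int \<bar>k\<bar>) \<le> ln (A * (1 + \<bar>u\<bar>))"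
    by (subst ln_le_cancel_iff) auto
  also have "\<dots> = ln A + ln (1 + \<bar>u\<bar>)" using A by (simp add: ln_mult)
  finally have "sqrt (ln (3 + real_of_int \<bar>j\<bar> + real_of_int \<bar>k\<bar>)) \<le> sqrt (ln A + ln (1 + \<bar>u\<bar>))"
    by simp
  also have "\<dots> \<le> sqrt (ln A) + sqrt (ln (1 + \<bar>u\<bar>))"
    using one_le_ln[OF A] by (intro sqrt_add_le_add_sqrt) auto
  also have "\<dots> \<le> sqrt (ln A) * w + sqrt (ln A) * (2 * w)"
  proof (intro add_mono)
    have sqrt_ln_A: "1 \<le> sqrt (ln A)" using one_le_ln[OF A] by simp
    then show "sqrt (ln A) \<le> sqrt (ln A) * w"
      using w by (simp add: mult_le_cancel_left1)
    have "sqrt (ln (1 + \<bar>u\<bar>)) \<le> 2 * w"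
      using sqrt_ln_le_powr_quarter[of "1 + \<bar>u\<bar>"] by (simp add: w_def)
    also have "\<dots> \<le> sqrt (ln A) * (2 * w)"
      using sqrt_ln_A w by (simp add: mult_le_cancel_right1)
    finally show "sqrt (ln (1 + \<bar>u\<bar>)) \<le> sqrt (ln A) * (2 * w)" .
  qed
  also have "\<dots> = 3 * sqrt (ln A) * w" by algebra
  finally have "sqrt (ln (3 + real_of_int \<bar>j\<bar> + real_of_int \<bar>k\<bar>)) \<le> 3 * sqrt (ln A) * w" .
  then show ?thesis by (simp only: log_scale_def A_def w_def u_def)
qed

definition zeta_sum :: "real \<Rightarrow> real" where
  "zeta_sum p = (\<Sum>n. (1 + real n) powr (- p))"

lemma summable_zeta_terms:
  assumes "1 < p" shows "summable (\<lambda>n. (1 + real n) powr (- p))"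
proof -
  have "summable (\<lambda>n. real n powr (- p))" using assms by (subst summable_real_powr_iff) auto
  then have "summable (\<lambda>n. real (Suc n) powr (- p))" by (subst summable_Suc_iff)
  then show ?thesis by (simp add: add.commute)
qed

lemma zeta_sum_nonneg: "1 < p \<Longrightarrow> 0 \<le> zeta_sum p"
  unfolding zeta_sum_def by (intro suminf_nonneg summable_zeta_terms) auto

lemma sum_powr_below_le_zeta_sum:
  assumes "finite S" "S \<subseteq> {k::int. real_of_int k \<le> c}" "1 < p"
  shows "(\<Sum>k\<in>S. (1 + (c - real_of_int k)) powr (- p)) \<le> zeta_sum p"
proof -
  define \<phi> where "\<phi> k = nat (\<lfloor>c\<rfloor> - k)" for k
  define g where "g = (\<lambda>n. (1 + real n) powr (- p))"
  have le_floor: "k \<le> \<lfloor>c\<rfloor>" if "k \<in> S" for k using assms(2) that by (auto simp: le_floor_iff)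
  have "inj_on \<phi> S"
    unfolding inj_on_def \<phi>_def using le_floor by (auto simp: nat_eq_iff)
  have "(\<Sum>k\<in>S. (1 + (c - real_of_int k)) powr (- p)) \<le> (\<Sum>k\<in>S. g (\<phi> k))"
  proof (rule sum_mono)
    fix k assume "k \<in> S"
    then have "1 + real (\<phi> k) \<le> 1 + (c - real_of_int k)"
      using le_floor[of k] by (simp add: \<phi>_def)
    then show "(1 + (c - real_of_int k)) powr (- p) \<le> g (\<phi> k)"
      unfolding g_def using assms(3) by (intro powr_mono2') auto
  qed
  also have "\<dots> = sum g (\<phi> ` S)" by (simp add: sum.reindex[OF \<open>inj_on \<phi> S\<close>])
  also have "\<dots> \<le> suminf g"
    by (rule sum_le_suminf) (use summable_zeta_terms[OF assms(3)] assms(1) in \<open>auto simp: g_def\<close>)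
  finally show ?thesis by (simp add: zeta_sum_def g_def)
qed

lemma sum_powr_above_le_zeta_sum:
  assumes "finite S" "S \<subseteq> {k::int. c \<le> real_of_int k}" "1 < p"
  shows "(\<Sum>k\<in>S. (1 + (real_of_int k - c)) powr (- p)) \<le> zeta_sum p"
proof -
  have "(\<Sum>k\<in>S. (1 + (real_of_int k - c)) powr (- p))
      = (\<Sum>k\<in>uminus ` S. (1 + (- c - real_of_int k)) powr (- p))"
    by (subst sum.reindex) (auto simp: inj_on_def algebra_simps)
  also have "\<dots> \<le> zeta_sum p"
    by (rule sum_powr_below_le_zeta_sum) (use assms in auto)
  finally show ?thesis .
qed

definition bump :: "int \<Rightarrow> int \<Rightarrow> real \<Rightarrow> real" where
  "bump j k x = (1 + \<bar>2 powr real_of_int j * x - real_of_int k\<bar>) powr (- (9/4))"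

lemma bump_nonneg: "0 \<le> bump j k x"
  by (simp add: bump_def)

lemma bump_continuous: "continuous_on A (bump j k)"
  unfolding bump_def by (intro continuous_intros) auto

lemma sum_bump_le:
  assumes "finite S"
  shows "(\<Sum>k\<in>S. bump j k x) \<le> 2 * zeta_sum (9/4)"
proof -
  define y where "y = 2 powr real_of_int j * x"
  define S_below where "S_below = S \<inter> {k. real_of_int k \<le> y}"
  define S_above where "S_above = S - {k. real_of_int k \<le> y}"
  have "(\<Sum>k\<in>S. bump j k x) = (\<Sum>k\<in>S_below. bump j k x) + (\<Sum>k\<in>S_above. bump j k x)"
    unfolding S_below_def S_above_def by (rule sum.Int_Diff[OF assms])
  also have "(\<Sum>k\<in>S_below. bump j k x) = (\<Sum>k\<in>S_below. (1 + (y - real_of_int k)) powr (- (9/4)))"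
    by (intro sum.cong) (auto simp: S_below_def bump_def y_def)
  also have "\<dots> \<le> zeta_sum (9/4)"
    by (rule sum_powr_below_le_zeta_sum) (use assms in \<open>auto simp: S_below_def\<close>)
  also have "(\<Sum>k\<in>S_above. bump j k x) = (\<Sum>k\<in>S_above. (1 + (real_of_int k - y)) powr (- (9/4)))"
    by (intro sum.cong) (auto simp: S_above_def bump_def y_def)
  also have "\<dots> \<le> zeta_sum (9/4)"
    by (rule sum_powr_above_le_zeta_sum) (use assms in \<open>auto simp: S_above_def\<close>)
  finally show ?thesis by simp
qed

lemma integral_decay_center_below:
  fixes \<alpha> b m M q :: real
  assumes a: "0 < \<alpha>" and mM: "m \<le> M" and b: "b \<le> \<alpha> * m" and q: "1 < q"
  shows "(\<lambda>x. (1 + \<bar>\<alpha> * x - b\<bar>) powr (- q)) integrable_on {m..M}"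
    "integral {m..M} (\<lambda>x. (1 + \<bar>\<alpha> * x - b\<bar>) powr (- q)) \<le> (1 + (\<alpha> * m - b)) powr (1 - q) / (\<alpha> * (q - 1))"
proof -
  define F where "F x = - ((1 + (\<alpha> * x - b)) powr (1 - q) / (\<alpha> * (q - 1)))" for x
  have above: "b \<le> \<alpha> * x" if "x \<in> {m..M}" for x
  proof -
    have "\<alpha> * m \<le> \<alpha> * x" using that a by (intro mult_left_mono) auto
    then show ?thesis using b by linarith
  qed
  have "(F has_vector_derivative (1 + (\<alpha> * x - b)) powr (- q)) (at x within {m..M})"
    if x: "x \<in> {m..M}" for x
  proof -
    have "DERIV (\<lambda>x. 1 + (\<alpha> * x - b)) x :> \<alpha>" by (auto intro!: derivative_eq_intros)
    then have "DERIV (\<lambda>x. (1 + (\<alpha> * x - b)) powr (1 - q)) x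
        :> (1 - q) * (1 + (\<alpha> * x - b)) powr (1 - q - of_nat 1) * \<alpha>"
      by (rule DERIV_fun_powr) (use above[OF x] in auto)
    then have "DERIV F x :> - ((1 - q) * (1 + (\<alpha> * x - b)) powr (1 - q - of_nat 1) * \<alpha> / (\<alpha> * (q - 1)))"
      unfolding F_def by (rule DERIV_minus[OF DERIV_cdivide])
    moreover have "- ((1 - q) * (1 + (\<alpha> * x - b)) powr (1 - q - of_nat 1) * \<alpha> / (\<alpha> * (q - 1)))
        = (1 + (\<alpha> * x - b)) powr (- q)"
      using a q by (simp add: field_simps)
    ultimately show ?thesis
      by (simp add: has_real_derivative_iff_has_vector_derivative[symmetric] has_field_derivative_at_within)
  qed
  then have "((\<lambda>x. (1 + (\<alpha> * x - b)) powr (- q)) has_integral F M - F m) {m..M}"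
    by (rule fundamental_theorem_of_calculus[OF mM])
  then have hi: "((\<lambda>x. (1 + \<bar>\<alpha> * x - b\<bar>) powr (- q)) has_integral F M - F m) {m..M}"
    by (rule has_integral_cong[THEN iffD1, rotated]) (use above in auto)
  then show "(\<lambda>x. (1 + \<bar>\<alpha> * x - b\<bar>) powr (- q)) integrable_on {m..M}" by blast
  have "F M - F m \<le> - F m" unfolding F_def using a q by (simp add: divide_nonneg_pos)
  then show "integral {m..M} (\<lambda>x. (1 + \<bar>\<alpha> * x - b\<bar>) powr (- q)) \<le> (1 + (\<alpha> * m - b)) powr (1 - q) / (\<alpha> * (q - 1))"
    using integral_unique[OF hi] by (simp add: F_def)
qed

lemma integral_decay_center_above:
  fixes \<alpha> b m M q :: real
  assumes a: "0 < \<alpha>" and mM: "m \<le> M" and b: "\<alpha> * M \<le> b" and q: "1 < q"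
  shows "(\<lambda>x. (1 + \<bar>\<alpha> * x - b\<bar>) powr (- q)) integrable_on {m..M}"
    "integral {m..M} (\<lambda>x. (1 + \<bar>\<alpha> * x - b\<bar>) powr (- q)) \<le> (1 + (b - \<alpha> * M)) powr (1 - q) / (\<alpha> * (q - 1))"
proof -
  define F where "F x = (1 + (b - \<alpha> * x)) powr (1 - q) / (\<alpha> * (q - 1))" for x
  have below: "\<alpha> * x \<le> b" if "x \<in> {m..M}" for x
  proof -
    have "\<alpha> * x \<le> \<alpha> * M" using that a by (intro mult_left_mono) auto
    then show ?thesis using b by linarith
  qed
  have "(F has_vector_derivative (1 + (b - \<alpha> * x)) powr (- q)) (at x within {m..M})"
    if x: "x \<in> {m..M}" for x
  proof -
    have "DERIV (\<lambda>x. 1 + (b - \<alpha> * x)) x :> - \<alpha>" by (auto intro!: derivative_eq_intros)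
    then have "DERIV (\<lambda>x. (1 + (b - \<alpha> * x)) powr (1 - q)) x
        :> (1 - q) * (1 + (b - \<alpha> * x)) powr (1 - q - of_nat 1) * - \<alpha>"
      by (rule DERIV_fun_powr) (use below[OF x] in auto)
    then have "DERIV F x :> (1 - q) * (1 + (b - \<alpha> * x)) powr (1 - q - of_nat 1) * - \<alpha> / (\<alpha> * (q - 1))"
      unfolding F_def by (rule DERIV_cdivide)
    moreover have "(1 - q) * (1 + (b - \<alpha> * x)) powr (1 - q - of_nat 1) * - \<alpha> / (\<alpha> * (q - 1))
        = (1 + (b - \<alpha> * x)) powr (- q)"
      using a q by (simp add: field_simps)
    ultimately show ?thesis
      by (simp add: has_real_derivative_iff_has_vector_derivative[symmetric] has_field_derivative_at_within)
  qed
  then have "((\<lambda>x. (1 + (b - \<alpha> * x)) powr (- q)) has_integral F M - F m) {m..M}"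
    by (rule fundamental_theorem_of_calculus[OF mM])
  then have hi: "((\<lambda>x. (1 + \<bar>\<alpha> * x - b\<bar>) powr (- q)) has_integral F M - F m) {m..M}"
    by (rule has_integral_cong[THEN iffD1, rotated]) (use below in auto)
  then show "(\<lambda>x. (1 + \<bar>\<alpha> * x - b\<bar>) powr (- q)) integrable_on {m..M}" by blast
  have "F M - F m \<le> F M" unfolding F_def using a q by (simp add: divide_nonneg_pos)
  then show "integral {m..M} (\<lambda>x. (1 + \<bar>\<alpha> * x - b\<bar>) powr (- q)) \<le> (1 + (b - \<alpha> * M)) powr (1 - q) / (\<alpha> * (q - 1))"
    using integral_unique[OF hi] by (simp add: F_def)
qed

lemma sum_integral_bump_below_le:
  assumes "m \<le> M" "finite S" "S \<subseteq> {k. real_of_int k * 2 powr (- real_of_int j) < m}"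
  shows "(\<Sum>k\<in>S. integral {m..M} (bump j k)) \<le> 4/5 * zeta_sum (5/4) * 2 powr (- real_of_int j)"
proof -
  define c where "c = 2 powr real_of_int j * m"
  have below: "real_of_int k \<le> c" if "k \<in> S" for k
    using assms(3) that mult_strict_right_mono[of "real_of_int k * 2 powr (- real_of_int j)" m "2 powr real_of_int j"]
    by (auto simp: c_def powr_minus field_simps)
  have "(\<Sum>k\<in>S. integral {m..M} (bump j k))
      \<le> (\<Sum>k\<in>S. (1 + (c - real_of_int k)) powr (- (5/4)) * (4/5 * 2 powr (- real_of_int j)))"
  proof (rule sum_mono)
    fix k assume k: "k \<in> S"
    have "integral {m..M} (bump j k) \<le> (1 + (c - real_of_int k)) powr (1 - 9/4) / (2 powr real_of_int j * (9/4 - 1))"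
      unfolding bump_def[abs_def] c_def using below[OF k] assms(1)
      by (intro integral_decay_center_below(2)) (auto simp: c_def)
    also have "\<dots> = (1 + (c - real_of_int k)) powr (- (5/4)) * (1 / (2 powr real_of_int j * (9/4 - 1)))"
      by simp
    also have "1 / (2 powr real_of_int j * (9/4 - 1)) = 4/5 * 2 powr (- real_of_int j)"
      by (simp add: powr_minus field_simps)
    finally show "integral {m..M} (bump j k) \<le> (1 + (c - real_of_int k)) powr (- (5/4)) * (4/5 * 2 powr (- real_of_int j))" .
  qed
  also have "\<dots> \<le> zeta_sum (5/4) * (4/5 * 2 powr (- real_of_int j))"
    unfolding sum_distrib_right[symmetric] using assms(2) below
    by (intro mult_right_mono sum_powr_below_le_zeta_sum) auto
  finally show ?thesis by simp
qed

lemma sum_integral_bump_above_le: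
  assumes "m \<le> M" "finite S" "S \<subseteq> {k. M < real_of_int k * 2 powr (- real_of_int j)}"
  shows "(\<Sum>k\<in>S. integral {m..M} (bump j k)) \<le> 4/5 * zeta_sum (5/4) * 2 powr (- real_of_int j)"
proof -
  define c where "c = 2 powr real_of_int j * M"
  have above: "c \<le> real_of_int k" if "k \<in> S" for k
    using assms(3) that mult_strict_right_mono[of M "real_of_int k * 2 powr (- real_of_int j)" "2 powr real_of_int j"]
    by (auto simp: c_def powr_minus field_simps)
  have "(\<Sum>k\<in>S. integral {m..M} (bump j k))
      \<le> (\<Sum>k\<in>S. (1 + (real_of_int k - c)) powr (- (5/4)) * (4/5 * 2 powr (- real_of_int j)))"
  proof (rule sum_mono)
    fix k assume k: "k \<in> S"
    have "integral {m..M} (bump j k) \<le> (1 + (real_of_int k - c)) powr (1 - 9/4) / (2 powr real_of_int j * (9/4 - 1))"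
      unfolding bump_def[abs_def] c_def using above[OF k] assms(1)
      by (intro integral_decay_center_above(2)) (auto simp: c_def)
    also have "\<dots> = (1 + (real_of_int k - c)) powr (- (5/4)) * (1 / (2 powr real_of_int j * (9/4 - 1)))"
      by simp
    also have "1 / (2 powr real_of_int j * (9/4 - 1)) = 4/5 * 2 powr (- real_of_int j)"
      by (simp add: powr_minus field_simps)
    finally show "integral {m..M} (bump j k) \<le> (1 + (real_of_int k - c)) powr (- (5/4)) * (4/5 * 2 powr (- real_of_int j))" .
  qed
  also have "\<dots> \<le> zeta_sum (5/4) * (4/5 * 2 powr (- real_of_int j))"
    unfolding sum_distrib_right[symmetric] using assms(2) above
    by (intro mult_right_mono sum_powr_above_le_zeta_sum) auto
  finally show ?thesis by simp
qed

section \<open>Summing the weighted integrals\<close>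

lemma weighted_decay_le_bump:
  fixes f :: "real \<Rightarrow> real"
  assumes "\<And>u. \<bar>f u\<bar> \<le> K * (1 + \<bar>u\<bar>) powr (-5/2)" and "0 \<le> x" "x \<le> 1"
  shows "sqrt (ln (3 + real_of_int \<bar>j\<bar> + real_of_int \<bar>k\<bar>)) * \<bar>f (2 powr real_of_int j * x - real_of_int k)\<bar>
    \<le> 3 * K * log_scale j * bump j k x"
proof -
  define u where "u = 2 powr real_of_int j * x - real_of_int k"
  have "sqrt (ln (3 + real_of_int \<bar>j\<bar> + real_of_int \<bar>k\<bar>)) * \<bar>f u\<bar>
      \<le> (3 * log_scale j * (1 + \<bar>u\<bar>) powr (1/4)) * (K * (1 + \<bar>u\<bar>) powr (-5/2))"
    using sqrt_ln_index_le[OF assms(2,3), of j k] log_scale_ge_one[of j]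
    by (intro mult_mono assms(1)) (auto simp: u_def)
  also have "\<dots> = 3 * K * log_scale j * ((1 + \<bar>u\<bar>) powr (1/4) * (1 + \<bar>u\<bar>) powr (-5/2))"
    by simp
  also have "(1 + \<bar>u\<bar>) powr (1/4) * (1 + \<bar>u\<bar>) powr (-5/2) = (1 + \<bar>u\<bar>) powr (- (9/4))"
    by (simp add: powr_add[symmetric])
  finally show ?thesis by (simp add: bump_def u_def)
qed

lemma weighted_product_integral_le:
  fixes f\<^sub>1 f\<^sub>2 :: "real \<Rightarrow> real"
  assumes decay\<^sub>1: "0 \<le> K\<^sub>1" "\<And>u. \<bar>f\<^sub>1 u\<bar> \<le> K\<^sub>1 * (1 + \<bar>u\<bar>) powr (-5/2)"
    and decay\<^sub>2: "0 \<le> K\<^sub>2" "\<And>u. \<bar>f\<^sub>2 u\<bar> \<le> K\<^sub>2 * (1 + \<bar>u\<bar>) powr (-5/2)"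
    and "0 \<le> m" "M \<le> 1"
  shows "Lw j\<^sub>1 j\<^sub>2 k\<^sub>1 k\<^sub>2 * \<bar>LINT x:{m..M}|lborel.
      f\<^sub>1 (2 powr real_of_int j\<^sub>1 * x - real_of_int k\<^sub>1) * f\<^sub>2 (2 powr real_of_int j\<^sub>2 * x - real_of_int k\<^sub>2)\<bar>
    \<le> 9 * K\<^sub>1 * K\<^sub>2 * log_scale j\<^sub>1 * log_scale j\<^sub>2
      * integral {m..M} (\<lambda>x. bump j\<^sub>1 k\<^sub>1 x * bump j\<^sub>2 k\<^sub>2 x)"
proof -
  define g where "g x = f\<^sub>1 (2 powr real_of_int j\<^sub>1 * x - real_of_int k\<^sub>1)
    * f\<^sub>2 (2 powr real_of_int j\<^sub>2 * x - real_of_int k\<^sub>2)" for x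
  define c where "c = 9 * K\<^sub>1 * K\<^sub>2 * log_scale j\<^sub>1 * log_scale j\<^sub>2"
  define \<Phi> where "\<Phi> x = c * (bump j\<^sub>1 k\<^sub>1 x * bump j\<^sub>2 k\<^sub>2 x)" for x
  have \<Phi>_integrable: "set_integrable lborel {m..M} \<Phi>"
    unfolding \<Phi>_def by (intro borel_integrable_atLeastAtMost' continuous_intros bump_continuous)
  have "Lw j\<^sub>1 j\<^sub>2 k\<^sub>1 k\<^sub>2 * \<bar>LINT x:{m..M}|lborel. g x\<bar>
      = \<bar>LINT x|lborel. Lw j\<^sub>1 j\<^sub>2 k\<^sub>1 k\<^sub>2 * (indicator {m..M} x *\<^sub>R g x)\<bar>"
    by (simp add: set_lebesgue_integral_def abs_mult Lw_def)
  also have "\<dots> \<le> (LINT x|lborel. indicator {m..M} x *\<^sub>R \<Phi> x)"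
  proof (rule abs_integral_le_integral_dominant)
    show "integrable lborel (\<lambda>x. indicator {m..M} x *\<^sub>R \<Phi> x)"
      using \<Phi>_integrable by (simp add: set_integrable_def)
    fix x
    show "\<bar>Lw j\<^sub>1 j\<^sub>2 k\<^sub>1 k\<^sub>2 * (indicator {m..M} x *\<^sub>R g x)\<bar> \<le> indicator {m..M} x *\<^sub>R \<Phi> x"
    proof (cases "x \<in> {m..M}")
      case True
      then have x: "0 \<le> x" "x \<le> 1" using assms by auto
      have "\<bar>Lw j\<^sub>1 j\<^sub>2 k\<^sub>1 k\<^sub>2 * g x\<bar> =
          (sqrt (ln (3 + real_of_int \<bar>j\<^sub>1\<bar> + real_of_int \<bar>k\<^sub>1\<bar>)) * \<bar>f\<^sub>1 (2 powr real_of_int j\<^sub>1 * x - real_of_int k\<^sub>1)\<bar>) *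
          (sqrt (ln (3 + real_of_int \<bar>j\<^sub>2\<bar> + real_of_int \<bar>k\<^sub>2\<bar>)) * \<bar>f\<^sub>2 (2 powr real_of_int j\<^sub>2 * x - real_of_int k\<^sub>2)\<bar>)"
        by (simp add: Lw_def g_def abs_mult)
      also have "\<dots> \<le> (3 * K\<^sub>1 * log_scale j\<^sub>1 * bump j\<^sub>1 k\<^sub>1 x) * (3 * K\<^sub>2 * log_scale j\<^sub>2 * bump j\<^sub>2 k\<^sub>2 x)"
        using decay\<^sub>1 log_scale_ge_one[of j\<^sub>1] bump_nonneg[of j\<^sub>1 k\<^sub>1 x]
        by (intro mult_mono weighted_decay_le_bump[OF decay\<^sub>1(2) x] weighted_decay_le_bump[OF decay\<^sub>2(2) x])
           auto
      also have "\<dots> = \<Phi> x" by (simp add: \<Phi>_def c_def)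
      finally show ?thesis using True by simp
    qed simp
  qed
  also have "\<dots> = integral {m..M} \<Phi>"
    using set_borel_integral_eq_integral(2)[OF \<Phi>_integrable] by (simp add: set_lebesgue_integral_def)
  also have "\<dots> = c * integral {m..M} (\<lambda>x. bump j\<^sub>1 k\<^sub>1 x * bump j\<^sub>2 k\<^sub>2 x)"
    unfolding \<Phi>_def[abs_def] by (rule integral_mult_right)
  finally show ?thesis by (simp add: g_def c_def)
qed

lemma integral_bump_product_integrable:
  "(\<lambda>x. bump j\<^sub>1 k\<^sub>1 x * bump j\<^sub>2 k\<^sub>2 x) integrable_on {m..M}"
  by (intro integrable_continuous_interval continuous_intros bump_continuous)

lemma sum_integral_bump_product_le:
  assumes "finite S\<^sub>1" "finite S\<^sub>2"
  shows "(\<Sum>k\<^sub>1\<in>S\<^sub>1. \<Sum>k\<^sub>2\<in>S\<^sub>2. integral {m..M} (\<lambda>x. bump j\<^sub>1 k\<^sub>1 x * bump j\<^sub>2 k\<^sub>2 x))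
    \<le> 2 * zeta_sum (9/4) * (\<Sum>k\<^sub>2\<in>S\<^sub>2. integral {m..M} (bump j\<^sub>2 k\<^sub>2))"
proof -
  have "(\<Sum>k\<^sub>1\<in>S\<^sub>1. \<Sum>k\<^sub>2\<in>S\<^sub>2. integral {m..M} (\<lambda>x. bump j\<^sub>1 k\<^sub>1 x * bump j\<^sub>2 k\<^sub>2 x))
      = (\<Sum>k\<^sub>1\<in>S\<^sub>1. integral {m..M} (\<lambda>x. \<Sum>k\<^sub>2\<in>S\<^sub>2. bump j\<^sub>1 k\<^sub>1 x * bump j\<^sub>2 k\<^sub>2 x))"
    using assms by (intro sum.cong refl integral_sum[symmetric] integral_bump_product_integrable) auto
  also have "\<dots> = integral {m..M} (\<lambda>x. \<Sum>k\<^sub>1\<in>S\<^sub>1. \<Sum>k\<^sub>2\<in>S\<^sub>2. bump j\<^sub>1 k\<^sub>1 x * bump j\<^sub>2 k\<^sub>2 x)"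
    using assms
    by (intro integral_sum[symmetric] integrable_sum integral_bump_product_integrable) auto
  also have "\<dots> = integral {m..M} (\<lambda>x. (\<Sum>k\<^sub>1\<in>S\<^sub>1. bump j\<^sub>1 k\<^sub>1 x) * (\<Sum>k\<^sub>2\<in>S\<^sub>2. bump j\<^sub>2 k\<^sub>2 x))"
    by (simp add: sum_product)
  also have "\<dots> \<le> integral {m..M} (\<lambda>x. 2 * zeta_sum (9/4) * (\<Sum>k\<^sub>2\<in>S\<^sub>2. bump j\<^sub>2 k\<^sub>2 x))"
    using assms sum_bump_le
    by (intro integral_le integrable_continuous_interval continuous_intros bump_continuous
          mult_right_mono sum_nonneg bump_nonneg) auto
  also have "\<dots> = 2 * zeta_sum (9/4) * (\<Sum>k\<^sub>2\<in>S\<^sub>2. integral {m..M} (bump j\<^sub>2 k\<^sub>2))"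
    by (simp add: integral_sum[OF assms(2)] integrable_continuous_interval[OF bump_continuous])
  finally show ?thesis .
qed

lemma nonneg_summable_on_infsum_le:
  fixes F :: "'a \<Rightarrow> real"
  assumes "\<And>x. 0 \<le> F x" "\<And>T. finite T \<Longrightarrow> T \<subseteq> A \<Longrightarrow> sum F T \<le> B"
  shows "F summable_on A \<and> infsum F A \<le> B"
proof
  show summable: "F summable_on A"
    by (rule nonneg_bdd_above_summable_on) (use assms in \<open>auto intro!: bdd_aboveI\<close>)
  show "infsum F A \<le> B" by (rule infsum_le_finite_sums[OF summable]) (use assms in auto)
qed

lemma weighted_product_infsum_le:
  fixes f\<^sub>1 f\<^sub>2 :: "real \<Rightarrow> real" and j\<^sub>1 j\<^sub>2 :: int and KS :: "int set"
  assumes decay\<^sub>1: "0 \<le> K\<^sub>1" "\<And>u. \<bar>f\<^sub>1 u\<bar> \<le> K\<^sub>1 * (1 + \<bar>u\<bar>) powr (-5/2)"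
    and decay\<^sub>2: "0 \<le> K\<^sub>2" "\<And>u. \<bar>f\<^sub>2 u\<bar> \<le> K\<^sub>2 * (1 + \<bar>u\<bar>) powr (-5/2)"
    and mM: "0 \<le> m" "m \<le> M" "M \<le> 1"
    and KS: "KS \<subseteq> {k. real_of_int k * 2 powr (- real_of_int j\<^sub>2) < m}
      \<or> KS \<subseteq> {k. M < real_of_int k * 2 powr (- real_of_int j\<^sub>2)}"
    and C: "72/5 * zeta_sum (9/4) * zeta_sum (5/4) * K\<^sub>1 * K\<^sub>2 \<le> C"
  defines "F \<equiv> \<lambda>(k\<^sub>1, k\<^sub>2). Lw j\<^sub>1 j\<^sub>2 k\<^sub>1 k\<^sub>2 * \<bar>LINT x:{m..M}|lborel.
      f\<^sub>1 (2 powr real_of_int j\<^sub>1 * x - real_of_int k\<^sub>1) * f\<^sub>2 (2 powr real_of_int j\<^sub>2 * x - real_of_int k\<^sub>2)\<bar>"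
  shows "F summable_on (UNIV \<times> KS) \<and> infsum F (UNIV \<times> KS)
    \<le> C * (log_scale j\<^sub>1 * log_scale j\<^sub>2 * 2 powr (- real_of_int j\<^sub>2))"
proof (rule nonneg_summable_on_infsum_le)
  show "0 \<le> F p" for p by (auto simp: F_def Lw_def split: prod.splits)
  fix T :: "(int \<times> int) set" assume T: "finite T" "T \<subseteq> UNIV \<times> KS"
  define c where "c = 9 * K\<^sub>1 * K\<^sub>2 * log_scale j\<^sub>1 * log_scale j\<^sub>2"
  have c: "0 \<le> c" using decay\<^sub>1(1) decay\<^sub>2(1) log_scale_nonneg by (simp add: c_def)
  have fin: "finite (fst ` T)" "finite (snd ` T)" using T by auto
  have "sum F T \<le> sum F (fst ` T \<times> snd ` T)"
    using fin by (intro sum_mono2) (force, force, auto simp: F_def Lw_def split: prod.splits)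
  also have "\<dots> = (\<Sum>k\<^sub>1\<in>fst ` T. \<Sum>k\<^sub>2\<in>snd ` T. F (k\<^sub>1, k\<^sub>2))"
    by (simp add: sum.cartesian_product)
  also have "\<dots> \<le> (\<Sum>k\<^sub>1\<in>fst ` T. \<Sum>k\<^sub>2\<in>snd ` T.
      c * integral {m..M} (\<lambda>x. bump j\<^sub>1 k\<^sub>1 x * bump j\<^sub>2 k\<^sub>2 x))"
    unfolding F_def c_def using mM
    by (intro sum_mono) (simp add: weighted_product_integral_le[OF decay\<^sub>1 decay\<^sub>2])
  also have "\<dots> \<le> c * (2 * zeta_sum (9/4) * (\<Sum>k\<^sub>2\<in>snd ` T. integral {m..M} (bump j\<^sub>2 k\<^sub>2)))"
    using sum_integral_bump_product_le[OF fin, of m M j\<^sub>1 j\<^sub>2] c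
    by (simp add: sum_distrib_left[symmetric] mult_left_mono)
  also have "\<dots> \<le> c * (2 * zeta_sum (9/4) * (4/5 * zeta_sum (5/4) * 2 powr (- real_of_int j\<^sub>2)))"
  proof (intro mult_left_mono c)
    have "snd ` T \<subseteq> KS" using T by auto
    then show "(\<Sum>k\<^sub>2\<in>snd ` T. integral {m..M} (bump j\<^sub>2 k\<^sub>2))
        \<le> 4/5 * zeta_sum (5/4) * 2 powr (- real_of_int j\<^sub>2)"
      using KS sum_integral_bump_below_le[OF mM(2) fin(2)] sum_integral_bump_above_le[OF mM(2) fin(2)]
      by blast
  qed (auto simp: zeta_sum_nonneg)
  also have "\<dots> = 72/5 * zeta_sum (9/4) * zeta_sum (5/4) * K\<^sub>1 * K\<^sub>2
      * (log_scale j\<^sub>1 * log_scale j\<^sub>2 * 2 powr (- real_of_int j\<^sub>2))"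
    by (simp add: c_def algebra_simps)
  also have "\<dots> \<le> C * (log_scale j\<^sub>1 * log_scale j\<^sub>2 * 2 powr (- real_of_int j\<^sub>2))"
    using C log_scale_nonneg by (intro mult_right_mono) auto
  finally show "sum F T \<le> C * (log_scale j\<^sub>1 * log_scale j\<^sub>2 * 2 powr (- real_of_int j\<^sub>2))" .
qed

theorem mainTheorem14:
  fixes \<psi> :: "real \<Rightarrow> real" and H1 H2 :: real
  assumes "meyer_wavelet \<psi>"
    and "1/2 < H1" "H1 < 1" "1/2 < H2" "H2 < 1" "H1 + H2 > 3/2"
  shows "\<exists>C>0. \<forall>t s j1 j2.
     t \<in> {0<..<1} \<and> s \<in> {0<..<1} \<and> j1 \<le> j2 \<and> 0 \<le> j2 \<longrightarrow>
     (let B = C * sqrt (ln (3 + real_of_int \<bar>j1\<bar> + 2 powr real_of_int j1))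
                * sqrt (ln (3 + real_of_int \<bar>j2\<bar> + 2 powr real_of_int j2))
                * 2 powr (- real_of_int j2);
          F = (\<lambda>(k1, k2). Lw j1 j2 k1 k2 * \<bar>Iint \<psi> H1 H2 j1 j2 k1 k2 t s\<bar>)
      in F summable_on (UNIV \<times> Zlt j2 t s) \<and> infsum F (UNIV \<times> Zlt j2 t s) \<le> B \<and>
         F summable_on (UNIV \<times> Zgt j2 t s) \<and> infsum F (UNIV \<times> Zgt j2 t s) \<le> B)"
proof -
  interpret two_vanishing_moments \<psi>
    using assms(1) by (rule meyer_wavelet_two_vanishing_moments)
  obtain K\<^sub>1 where K\<^sub>1: "0 \<le> K\<^sub>1" "\<And>u. \<bar>psiH \<psi> H1 u\<bar> \<le> K\<^sub>1 * (1 + \<bar>u\<bar>) powr (-5/2)"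
    using psiH_decay[OF assms(2,3)] by blast
  obtain K\<^sub>2 where K\<^sub>2: "0 \<le> K\<^sub>2" "\<And>u. \<bar>psiH \<psi> H2 u\<bar> \<le> K\<^sub>2 * (1 + \<bar>u\<bar>) powr (-5/2)"
    using psiH_decay[OF assms(4,5)] by blast
  define C where "C = 72/5 * zeta_sum (9/4) * zeta_sum (5/4) * K\<^sub>1 * K\<^sub>2 + 1"
  have "0 \<le> 72/5 * zeta_sum (9/4) * zeta_sum (5/4) * K\<^sub>1 * K\<^sub>2"
    using K\<^sub>1(1) K\<^sub>2(1) zeta_sum_nonneg[of "9/4"] zeta_sum_nonneg[of "5/4"] by simp
  then have C: "72/5 * zeta_sum (9/4) * zeta_sum (5/4) * K\<^sub>1 * K\<^sub>2 \<le> C" "0 < C"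
    unfolding C_def by linarith+
  have "(\<lambda>(k1, k2). Lw j1 j2 k1 k2 * \<bar>Iint \<psi> H1 H2 j1 j2 k1 k2 t s\<bar>) summable_on (UNIV \<times> KS)
      \<and> infsum (\<lambda>(k1, k2). Lw j1 j2 k1 k2 * \<bar>Iint \<psi> H1 H2 j1 j2 k1 k2 t s\<bar>) (UNIV \<times> KS)
        \<le> C * sqrt (ln (3 + real_of_int \<bar>j1\<bar> + 2 powr real_of_int j1))
            * sqrt (ln (3 + real_of_int \<bar>j2\<bar> + 2 powr real_of_int j2)) * 2 powr (- real_of_int j2)"
    if "t \<in> {0<..<1}" "s \<in> {0<..<1}" "KS = Zlt j2 t s \<or> KS = Zgt j2 t s"
    for t s :: real and j1 j2 :: int and KS
    using weighted_product_infsum_le[OF K\<^sub>1 K\<^sub>2, where m = "min t s" and M = "max t s" and KS = KS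
        and j\<^sub>1 = j1 and j\<^sub>2 = j2, OF _ _ _ _ C(1)] that
    unfolding Iint_def Zlt_def Zgt_def log_scale_def by (auto simp: mult.assoc)
  then show ?thesis
    using C(2) unfolding Let_def by blast
qed

end
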